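(* Fix an integer blocklength $m\ge 1$, a message size $N_c>0$ (bits), an information leakage level $\delta\in(0,1/2)$, and set $\mu=Q^{-1}(\delta)$, where $Q(y)=\frac{1}{\sqrt{2\pi}}\int_y^\infty e^{-t^2/2}\,dt$. Let $V(y)=(\log_2 e)^2\left(1-(1+y)^{-2}\right)$ for $y\ge 0$. Fix constants $a_C\in(0,1)$, $\varrho_E^2\ge 0$, $P>0$, $\sigma^2>0$, and $G_E>0$ (the path-loss factor $G_E=(d_{SR_2}d_{R_2E})^{-\alpha}$). For $x\ge 0$ (representing the squared optimal eavesdropper channel amplitude $|\gamma_O^{(E)}|^2$) define $$\gamma_{E,C}(x)=\frac{a_C P G_E\, x}{\varrho_E^2 P G_E\, x+\sigma^2},\qquad \tilde\beta(x)=(1+\gamma_{E,C}(x))\exp\!\left(\left(\frac{\mu V^{1/2}(\gamma_{E,C}(x))}{\sqrt m}+\frac{N_c}{m}\right)\ln 2\right)-1.$$ Then $\tilde\beta$ is a monotonically increasing function of $x=|\gamma_O^{(E)}|^2$ on $[0,\infty)$.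
   Context: $\tilde\beta$ is the security threshold of the finite-blocklength secure block error rate approximation; $\gamma_{E,C}$ is the SNR at an eavesdropper (with hardware impairment level $\varrho_E^2$) for decoding the central user's message after ideal removal of its own signal. *)

theory Defs
  imports "HOL-Analysis.Analysis"
begin

definition Qfun :: "real \<Rightarrow> real" where
  "Qfun y = (1 / sqrt (2 * pi)) * (LINT t:{y..}|lborel. exp (- (t\<^sup>2) / 2))"

text \<open>Inverse of Q (Q is strictly decreasing onto (0,1)).\<close>
definition Qinv :: "real \<Rightarrow> real" where
  "Qinv d = (THE y. Qfun y = d)"

definition Vdisp :: "real \<Rightarrow> real" where
  "Vdisp y = (log 2 (exp 1))\<^sup>2 * (1 - 1 / (1 + y)\<^sup>2)"

definition gammaEC :: "real \<Rightarrow> real \<Rightarrow> real \<Rightarrow> real \<Rightarrow> real \<Rightarrow> real \<Rightarrow> real" where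
  "gammaEC aC rhoE2 P sigma2 GE x = (aC * P * GE * x) / (rhoE2 * P * GE * x + sigma2)"

definition beta_tilde :: "nat \<Rightarrow> real \<Rightarrow> real \<Rightarrow> real \<Rightarrow> real \<Rightarrow> real \<Rightarrow> real \<Rightarrow> real \<Rightarrow> real \<Rightarrow> real" where
  "beta_tilde m Nc delta aC rhoE2 P sigma2 GE x =
     (let g = gammaEC aC rhoE2 P sigma2 GE x; mu = Qinv delta in
      (1 + g) * exp ((mu * sqrt (Vdisp g) / sqrt (real m) + Nc / real m) * ln 2) - 1)"

end

theory Submission
  imports Defs "HOL-Probability.Probability"
begin

text \<open>Since \<open>t \<mapsto> 1 + t\<close>, \<open>V\<close>, \<open>sqrt\<close> and \<open>exp\<close> are monotone on \<open>[0,\<infinity>)\<close> and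
  \<open>x \<mapsto> a x / (b x + c)\<close> is monotone there for \<open>a, b \<ge> 0 < c\<close>, the function \<open>\<beta>\<close> is
  monotone as soon as the coefficient \<open>\<mu> = Q\<^sup>-\<^sup>1(\<delta>)\<close> of \<open>sqrt V\<close> is nonnegative.
  This is where \<open>\<delta> \<le> 1/2\<close> enters: the Gaussian tail \<open>Q\<close> is continuous and strictly
  decreasing from \<open>Q 0 = 1/2\<close> to \<open>0\<close>, so the value \<open>\<delta>\<close> is attained exactly once, at a
  point \<open>\<ge> 0\<close>.\<close>

lemma std_normal_density_le_1: "std_normal_density t \<le> 1"
proof -
  have "1 / sqrt (2 * pi) \<le> 1"
    using pi_gt3 by (simp add: divide_le_eq)
  moreover have "exp (- t\<^sup>2 / 2) \<le> 1"
    by simp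
  ultimately show ?thesis
    unfolding std_normal_density_def by (intro mult_le_one) auto
qed

lemma std_normal_density_antimono_abs:
  assumes "\<bar>t\<bar> \<le> \<bar>s\<bar>"
  shows "std_normal_density s \<le> std_normal_density t"
proof -
  have "t\<^sup>2 \<le> s\<^sup>2"
    using assms by (simp flip: abs_le_square_iff)
  then show ?thesis
    unfolding std_normal_density_def by (intro mult_left_mono) auto
qed

lemma std_normal_density_minus: "std_normal_density (- t) = std_normal_density t"
  by (simp add: std_normal_density_def)

lemma set_integrable_std_normal_density:
  "A \<in> sets borel \<Longrightarrow> set_integrable lborel A std_normal_density"
  unfolding set_integrable_def by (intro integrable_mult_indicator) auto

lemma Qfun_eq_set_integral: "Qfun y = (LINT t:{y..}|lborel. std_normal_density t)"
  unfolding Qfun_def std_normal_density_def by simp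

lemma Qfun_split:
  assumes "y \<le> z"
  shows "Qfun y = (LINT t:{y..<z}|lborel. std_normal_density t) + Qfun z"
proof -
  have "{y..} = {y..<z} \<union> {z..}"
    using assms by auto
  then show ?thesis
    unfolding Qfun_eq_set_integral
    by (simp only:) (rule set_integral_Un, auto intro: set_integrable_std_normal_density)
qed

lemma set_integrable_const_Ico: "set_integrable lborel {y..<z :: real} (\<lambda>_. c :: real)"
  unfolding set_integrable_def
  by (cases "y \<le> z") (auto intro!: integrable_real_mult_indicator)

lemma std_normal_integral_Ico_le:
  assumes "y \<le> z"
  shows "(LINT t:{y..<z}|lborel. std_normal_density t) \<le> z - y"
proof -
  have "(LINT t:{y..<z}|lborel. std_normal_density t) \<le> (LINT t:{y..<z}|lborel. 1)"
    by (intro set_integral_mono set_integrable_std_normal_density std_normal_density_le_1)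
       (auto intro: set_integrable_const_Ico)
  also have "\<dots> = z - y"
    using assms by (simp add: set_integral_const)
  finally show ?thesis .
qed

lemma std_normal_integral_Ico_pos:
  assumes "y < z"
  shows "0 < (LINT t:{y..<z}|lborel. std_normal_density t)"
proof -
  define c where "c = std_normal_density (\<bar>y\<bar> + \<bar>z\<bar>)"
  have "0 < c * (z - y)"
    using assms normal_density_pos[of 1] by (simp add: c_def)
  also have "\<dots> = (LINT t:{y..<z}|lborel. c)"
    using assms by (simp add: set_integral_const)
  also have "\<dots> \<le> (LINT t:{y..<z}|lborel. std_normal_density t)"
    unfolding c_def
    by (intro set_integral_mono set_integrable_std_normal_density std_normal_density_antimono_abs)
       (auto intro: set_integrable_const_Ico)
  finally show ?thesis .
qed

lemma Qfun_strict_antimono: "y < z \<Longrightarrow> Qfun z < Qfun y"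
  using Qfun_split[of y z] std_normal_integral_Ico_pos[of y z] by simp

lemma lipschitz_on_Qfun: "1-lipschitz_on UNIV Qfun"
proof (rule lipschitz_onI)
  have Qfun_diff: "\<bar>Qfun y - Qfun z\<bar> \<le> z - y" if "y \<le> z" for y z
    using Qfun_split[OF that] std_normal_integral_Ico_le[OF that]
      std_normal_integral_Ico_pos[of y z] that
    by (cases "y = z") auto
  show "dist (Qfun y) (Qfun z) \<le> 1 * dist y z" for y z
  proof (cases "y \<le> z")
    case True
    then show ?thesis
      using Qfun_diff[of y z] by (simp add: dist_real_def)
  next
    case False
    then show ?thesis
      using Qfun_diff[of z y] by (simp add: dist_real_def abs_minus_commute)
  qed
qed simp

lemma Qfun_tendsto_0: "(Qfun \<longlongrightarrow> 0) at_top"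
proof -
  have "((\<lambda>y. LBINT t. indicator {y..} t *\<^sub>R std_normal_density t) \<longlongrightarrow> (LBINT t :: real. 0)) at_top"
  proof (rule integral_dominated_convergence_at_top[where w = std_normal_density and f = "\<lambda>_. 0"])
    show "AE t in lborel. ((\<lambda>y. indicator {y..} t *\<^sub>R std_normal_density t) \<longlongrightarrow> 0) at_top"
    proof (rule AE_I2)
      fix t :: real
      have "\<forall>\<^sub>F y in at_top. indicator {y..} t *\<^sub>R std_normal_density t = 0"
        using eventually_gt_at_top[of t] by eventually_elim (simp split: split_indicator)
      then show "((\<lambda>y. indicator {y..} t *\<^sub>R std_normal_density t) \<longlongrightarrow> 0) at_top"
        by (rule tendsto_eventually)
    qed
  qed (auto split: split_indicator)
  then show ?thesis
    unfolding Qfun_eq_set_integral set_lebesgue_integral_def by simp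
qed

lemma Qfun_0: "Qfun 0 = 1/2"
proof -
  have "{..<0} \<union> {0..} = (UNIV :: real set)"
    by auto
  then have "1 = (LINT t:{..<0} \<union> {0..}|lborel. std_normal_density t)"
    by (simp add: set_lebesgue_integral_def)
  also have "\<dots> = (LINT t:{..<0}|lborel. std_normal_density t) + Qfun 0"
    unfolding Qfun_eq_set_integral
    by (rule set_integral_Un) (auto intro: set_integrable_std_normal_density)
  also have "(LINT t:{..<0}|lborel. std_normal_density t)
      = (LINT t:{0<..}|lborel. std_normal_density t)"
    by (subst set_integral_reflect) (simp add: std_normal_density_minus greaterThan_def)
  also have "\<dots> = Qfun 0"
    unfolding Qfun_eq_set_integral
    by (rule set_integral_cong_set)
       (auto intro!: AE_I[where N = "{0}"] simp: set_borel_measurable_def)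
  finally show ?thesis
    by simp
qed

lemma Qinv_eqI:
  assumes "Qfun y = d"
  shows "Qinv d = y"
  unfolding Qinv_def
proof (rule the_equality)
  fix z
  assume "Qfun z = d"
  then show "z = y"
    using assms Qfun_strict_antimono[of z y] Qfun_strict_antimono[of y z]
    by (cases z y rule: linorder_cases) auto
qed fact

lemma Qinv_nonneg:
  assumes "0 < d" and "d \<le> 1/2"
  shows "0 \<le> Qinv d"
proof -
  have "\<forall>\<^sub>F z in at_top. 0 \<le> z \<and> Qfun z < d"
    by (intro eventually_conj eventually_ge_at_top order_tendstoD(2)[OF Qfun_tendsto_0 \<open>0 < d\<close>])
  then obtain z where "0 \<le> z" and "Qfun z < d"
    by (auto simp: eventually_at_top_linorder)
  moreover have "continuous_on {0..z} Qfun"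
    using lipschitz_on_continuous_on[OF lipschitz_on_Qfun] by (rule continuous_on_subset) simp
  ultimately obtain y where "0 \<le> y" and "Qfun y = d"
    using IVT2'[of Qfun z d 0] assms Qfun_0 by auto
  then show ?thesis
    by (metis Qinv_eqI)
qed

lemma mono_on_linear_fractional:
  fixes a b c :: real
  assumes "0 \<le> a" and "0 \<le> b" and "0 < c"
  shows "mono_on {0..} (\<lambda>x. a * x / (b * x + c))"
proof (rule mono_onI)
  fix x y :: real
  assume "x \<in> {0..}" and "y \<in> {0..}" and "x \<le> y"
  then have "0 < b * x + c" and "0 < b * y + c"
    using assms by (auto intro: add_nonneg_pos)
  moreover have "a * x * (b * y + c) \<le> a * y * (b * x + c)"
    using assms \<open>x \<le> y\<close> by (simp add: algebra_simps mult_left_mono)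
  ultimately show "a * x / (b * x + c) \<le> a * y / (b * y + c)"
    by (simp add: divide_le_eq le_divide_eq mult.commute mult.left_commute)
qed

lemma gammaEC_nonneg:
  assumes "0 \<le> aC" and "0 \<le> rhoE2" and "0 < P" and "0 < sigma2" and "0 < GE" and "0 \<le> x"
  shows "0 \<le> gammaEC aC rhoE2 P sigma2 GE x"
  using assms unfolding gammaEC_def by (simp add: add_nonneg_pos)

lemma mono_on_Vdisp: "mono_on {0..} Vdisp"
proof (rule mono_onI)
  fix g h :: real
  assume "g \<in> {0..}" and "g \<le> h"
  then have "1 / (1 + h)\<^sup>2 \<le> 1 / (1 + g)\<^sup>2"
    by (intro divide_left_mono power_mono mult_pos_pos) auto
  then show "Vdisp g \<le> Vdisp h"
    unfolding Vdisp_def by (intro mult_left_mono) auto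
qed

lemma mono_on_beta_tilde_of_gamma:
  assumes "0 \<le> mu"
  shows "mono_on {0..} (\<lambda>g. (1 + g) * exp ((mu * sqrt (Vdisp g) / sqrt (real m) + Nc / real m) * ln 2) - 1)"
proof (rule mono_onI)
  fix g h :: real
  assume "g \<in> {0..}" and "h \<in> {0..}" and "g \<le> h"
  then have "sqrt (Vdisp g) \<le> sqrt (Vdisp h)"
    using mono_on_Vdisp by (simp add: mono_onD)
  then have "mu * sqrt (Vdisp g) / sqrt (real m) \<le> mu * sqrt (Vdisp h) / sqrt (real m)"
    using assms by (intro divide_right_mono mult_left_mono) auto
  then show "(1 + g) * exp ((mu * sqrt (Vdisp g) / sqrt (real m) + Nc / real m) * ln 2) - 1
      \<le> (1 + h) * exp ((mu * sqrt (Vdisp h) / sqrt (real m) + Nc / real m) * ln 2) - 1"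
    using \<open>g \<in> {0..}\<close> \<open>g \<le> h\<close> by (simp add: mult_mono)
qed

theorem proposition1:
  fixes m :: nat and Nc delta aC rhoE2 P sigma2 GE :: real
  assumes "m \<ge> 1" and "Nc > 0" and "0 < delta" and "delta < 1/2"
    and "0 < aC" and "aC < 1" and "rhoE2 \<ge> 0" and "P > 0" and "sigma2 > 0" and "GE > 0"
  shows "mono_on {0..} (beta_tilde m Nc delta aC rhoE2 P sigma2 GE)"
proof -
  let ?\<gamma> = "gammaEC aC rhoE2 P sigma2 GE"
  let ?F = "\<lambda>g. (1 + g) * exp ((Qinv delta * sqrt (Vdisp g) / sqrt (real m) + Nc / real m) * ln 2) - 1"
  have beta_tilde_eq: "beta_tilde m Nc delta aC rhoE2 P sigma2 GE = ?F \<circ> ?\<gamma>"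
    by (simp add: beta_tilde_def Let_def fun_eq_iff)
  have "mono_on {0..} ?F"
    using Qinv_nonneg assms by (intro mono_on_beta_tilde_of_gamma) simp
  moreover have "mono_on {0..} ?\<gamma>"
    unfolding gammaEC_def using assms by (intro mono_on_linear_fractional) auto
  moreover have "?\<gamma> ` {0..} \<subseteq> {0..}"
    using gammaEC_nonneg assms by auto
  ultimately show ?thesis
    unfolding beta_tilde_eq by (rule monotone_on_o)
qed

end
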